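(* Let $\mathcal N$ be a normal network on $X$ with $|X|\ge 3$, and let $\mathcal R$ be the set of triples displayed by $\mathcal N$. Let $\{a,b\}\subseteq X$ with $a\neq b$. Then $\{a,b\}$ is a cherry of $\mathcal N$ if and only if the following holds: whenever $xy|z\in\mathcal R$ and $\{a,b\}\subseteq\{x,y,z\}$, we have $\{a,b\}=\{x,y\}$.
   Context: A (rooted binary) phylogenetic network on $X$ is a rooted acyclic digraph without parallel arcs whose root has in-degree $0$ and out-degree $2$, whose out-degree-$0$ vertices (leaves) have in-degree $1$ and form the set $X$, and whose other vertices are tree vertices (in-degree $1$, out-degree $2$) or reticulations (in-degree $2$, out-degree $1$). A reticulation arc $(u,v)$ (arc into a reticulation) is a shortcut if there is another directed path from $u$ to $v$. The network is tree-child if every non-leaf vertex has a child that is a tree vertex or a leaf, and normal if it is tree-child without shortcuts. For a leaf $x$, $p_x$ denotes its parent; $\{a,b\}$ is a cherry if $p_a=p_b$. A triple $xy|z$ is the rooted binary phylogenetic tree on $\{x,y,z\}$ in which $x,y$ share a parent (so $xy|z=yx|z$). The network displays a phylogenetic tree $\mathcal T$ on a subset of $X$ if $\mathcal T$ can be obtained from the network by deleting arcs and vertices and suppressing vertices of in-degree one and out-degree one. *)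

theory Defs
  imports Main
begin

text \<open>A network is given by a vertex set V, an arc set A (a set of pairs, so no
parallel arcs), a root r and a leaf set X (leaves are the vertices themselves).\<close>

definition indeg :: "('v \<times> 'v) set \<Rightarrow> 'v \<Rightarrow> nat" where
  "indeg A v = card {u. (u, v) \<in> A}"

definition outdeg :: "('v \<times> 'v) set \<Rightarrow> 'v \<Rightarrow> nat" where
  "outdeg A v = card {w. (v, w) \<in> A}"

definition phylo_network :: "'v set \<Rightarrow> ('v \<times> 'v) set \<Rightarrow> 'v \<Rightarrow> 'v set \<Rightarrow> bool" where
  "phylo_network V A r X \<longleftrightarrow>
     finite V \<and> A \<subseteq> V \<times> V \<and> acyclic A \<and>
     r \<in> V \<and> indeg A r = 0 \<and> outdeg A r = 2 \<and>
     X = {v \<in> V. outdeg A v = 0} \<and>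
     (\<forall>x\<in>X. indeg A x = 1) \<and>
     (\<forall>v\<in>V. v \<noteq> r \<and> v \<notin> X \<longrightarrow>
        (indeg A v = 1 \<and> outdeg A v = 2) \<or> (indeg A v = 2 \<and> outdeg A v = 1))"

definition tree_vertex :: "'v set \<Rightarrow> ('v \<times> 'v) set \<Rightarrow> 'v \<Rightarrow> bool" where
  "tree_vertex V A v \<longleftrightarrow> v \<in> V \<and> indeg A v = 1 \<and> outdeg A v = 2"

definition reticulation :: "'v set \<Rightarrow> ('v \<times> 'v) set \<Rightarrow> 'v \<Rightarrow> bool" where
  "reticulation V A v \<longleftrightarrow> v \<in> V \<and> indeg A v = 2 \<and> outdeg A v = 1"

definition tree_child :: "'v set \<Rightarrow> ('v \<times> 'v) set \<Rightarrow> 'v \<Rightarrow> 'v set \<Rightarrow> bool" where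
  "tree_child V A r X \<longleftrightarrow> phylo_network V A r X \<and>
     (\<forall>v\<in>V - X. \<exists>c. (v, c) \<in> A \<and> (tree_vertex V A c \<or> c \<in> X))"

definition shortcut :: "'v set \<Rightarrow> ('v \<times> 'v) set \<Rightarrow> 'v \<Rightarrow> 'v \<Rightarrow> bool" where
  "shortcut V A u v \<longleftrightarrow> (u, v) \<in> A \<and> reticulation V A v \<and> (u, v) \<in> (A - {(u, v)})\<^sup>+"

definition normal :: "'v set \<Rightarrow> ('v \<times> 'v) set \<Rightarrow> 'v \<Rightarrow> 'v set \<Rightarrow> bool" where
  "normal V A r X \<longleftrightarrow> tree_child V A r X \<and> (\<forall>u v. \<not> shortcut V A u v)"

definition parent :: "('v \<times> 'v) set \<Rightarrow> 'v \<Rightarrow> 'v" where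
  "parent A x = (THE p. (p, x) \<in> A)"

definition cherry :: "('v \<times> 'v) set \<Rightarrow> 'v set \<Rightarrow> 'v \<Rightarrow> 'v \<Rightarrow> bool" where
  "cherry A X a b \<longleftrightarrow> a \<in> X \<and> b \<in> X \<and> parent A a = parent A b"

definition dpath :: "('v \<times> 'v) set \<Rightarrow> 'v list \<Rightarrow> 'v \<Rightarrow> 'v \<Rightarrow> bool" where
  "dpath A p u v \<longleftrightarrow> p \<noteq> [] \<and> hd p = u \<and> last p = v \<and> distinct p \<and>
     (\<forall>i. Suc i < length p \<longrightarrow> (p ! i, p ! Suc i) \<in> A)"

text \<open>The network displays the triple xy|z iff the triple (root w, internal vertex u,
arcs w->u, w->z, u->x, u->y) is obtained from it by deleting arcs and vertices and
suppressing in-degree-1/out-degree-1 vertices, i.e. iff a subdivision of the triple is a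
subgraph: vertices w, u and directed paths replacing the four arcs, pairwise meeting only in
shared endpoints.\<close>
definition displays_triple :: "'v set \<Rightarrow> ('v \<times> 'v) set \<Rightarrow> 'v set \<Rightarrow> 'v \<Rightarrow> 'v \<Rightarrow> 'v \<Rightarrow> bool" where
  "displays_triple V A X x y z \<longleftrightarrow>
     x \<in> X \<and> y \<in> X \<and> z \<in> X \<and> x \<noteq> y \<and> x \<noteq> z \<and> y \<noteq> z \<and>
     (\<exists>w u P1 P2 P3 P4. w \<in> V \<and> u \<in> V \<and> w \<noteq> u \<and>
        dpath A P1 w u \<and> dpath A P2 w z \<and> dpath A P3 u x \<and> dpath A P4 u y \<and>
        set P1 \<inter> set P2 = {w} \<and> set P1 \<inter> set P3 = {u} \<and> set P1 \<inter> set P4 = {u} \<and>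
        set P2 \<inter> set P3 = {} \<and> set P2 \<inter> set P4 = {} \<and> set P3 \<inter> set P4 = {u})"

definition displayed_triples :: "'v set \<Rightarrow> ('v \<times> 'v) set \<Rightarrow> 'v set \<Rightarrow> ('v \<times> 'v \<times> 'v) set" where
  "displayed_triples V A X = {(x, y, z). displays_triple V A X x y z}"

end

theory Submission
  imports Defs
begin

text \<open>
  If {a, b} is a cherry with parent p, then no displayed triple can have a or b as its outgroup z:
  in an embedding of xy|z the paths to z and to x are vertex-disjoint, but both would have to end
  with an arc out of p.

  Conversely, suppose {a, b} is not a cherry and let v be a lowest common ancestor of a and b.
  As a and b do not share the parent v, some child u of v leading to one of them, say a, is not
  a leaf. Let m = u if u is a tree vertex and let m be the other parent of u if u is a
  reticulation. In both cases m has a child x leading to a and a different child d from which a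
  tree path runs to a leaf c; rooting the embedding at a lowest common ancestor of v and m, whose
  path to b passes through v, displays ac|b. Tree-childness keeps the tree path away from the path
  to a, and the absence of shortcuts makes parents of a common child, and hence children of a
  common parent, incomparable.
\<close>

lemma acyclic_rtrancl_back: "acyclic A \<Longrightarrow> (x, y) \<in> A\<^sup>+ \<Longrightarrow> (y, x) \<notin> A\<^sup>*"
  unfolding acyclic_def by (meson trancl_rtrancl_trancl)

lemma rtrancl_Diff_arc: "(x, y) \<in> R\<^sup>* \<Longrightarrow> (b, y) \<notin> R\<^sup>* \<Longrightarrow> (x, y) \<in> (R - {(a, b)})\<^sup>*"
proof (induction rule: rtrancl_induct)
  case (step y z)
  have "(b, y) \<notin> R\<^sup>*" using step(2,4) by (meson rtrancl.rtrancl_into_rtrancl)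
  moreover have "z \<noteq> b" using step(4) by blast
  ultimately show ?case using step(2,3) by (simp add: rtrancl.rtrancl_into_rtrancl)
qed simp

section \<open>Walks\<close>

inductive walk :: "('v \<times> 'v) set \<Rightarrow> 'v \<Rightarrow> 'v list \<Rightarrow> 'v \<Rightarrow> bool" for A where
  walk_single: "walk A u [u] u"
| walk_Cons: "(u, x) \<in> A \<Longrightarrow> walk A x p v \<Longrightarrow> walk A u (u # p) v"

lemma walk_ConsE:
  assumes "walk A u p v"
  obtains p' where "p = u # p'"
  using assms by (cases rule: walk.cases) auto

lemma walk_last: "walk A u p v \<Longrightarrow> last p = v"
  by (induction rule: walk.induct) (auto elim: walk_ConsE)

lemma walk_start_in_set: "walk A u p v \<Longrightarrow> u \<in> set p"
  by (auto elim: walk_ConsE)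

lemma walk_end_in_set: "walk A u p v \<Longrightarrow> v \<in> set p"
  by (induction rule: walk.induct) auto

lemma walk_rtrancl: "walk A u p v \<Longrightarrow> (u, v) \<in> A\<^sup>*"
  by (induction rule: walk.induct) (auto intro: converse_rtrancl_into_rtrancl)

lemma walk_set_rtrancl: "walk A u p v \<Longrightarrow> s \<in> set p \<Longrightarrow> (u, s) \<in> A\<^sup>* \<and> (s, v) \<in> A\<^sup>*"
  by (induction rule: walk.induct) (auto intro: converse_rtrancl_into_rtrancl walk_rtrancl)

lemma rtrancl_imp_walk: "(u, v) \<in> A\<^sup>* \<Longrightarrow> \<exists>p. walk A u p v"
  by (induction rule: converse_rtrancl_induct) (auto intro: walk.intros)

lemma walk_append: "walk A u p v \<Longrightarrow> walk A v q w \<Longrightarrow> walk A u (p @ tl q) w"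
proof (induction rule: walk.induct)
  case (walk_single u)
  then show ?case by (metis append_Cons append_Nil list.sel(3) walk_ConsE)
qed (auto intro: walk_Cons)

lemma walk_tl_trancl: "walk A u p v \<Longrightarrow> s \<in> set (tl p) \<Longrightarrow> (u, s) \<in> A\<^sup>+"
  by (induction rule: walk.induct)
    (auto elim: walk_ConsE intro: rtrancl_into_trancl2 dest: walk_set_rtrancl)

lemma walk_tl_in_arc: "walk A u p v \<Longrightarrow> s \<in> set (tl p) \<Longrightarrow> \<exists>s'\<in>set p. (s', s) \<in> A"
proof (induction rule: walk.induct)
  case (walk_Cons u x p v)
  then show ?case by (cases "s = x") (auto elim: walk_ConsE)
qed simp

lemma walk_last_arc:
  assumes "walk A u p v" and "u \<noteq> v"
  shows "\<exists>s\<in>set p. (s, v) \<in> A"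
proof -
  obtain p' where p: "p = u # p'" using assms(1) by (rule walk_ConsE)
  have "v \<in> set p'" using walk_end_in_set[OF assms(1)] p assms(2) by simp
  then show ?thesis using walk_tl_in_arc[OF assms(1)] p by simp
qed

lemma walk_distinct:
  assumes "acyclic A"
  shows "walk A u p v \<Longrightarrow> distinct p"
proof (induction rule: walk.induct)
  case (walk_Cons u x p v)
  then show ?case
    using acyclic_rtrancl_back[OF assms r_into_trancl'] by (auto dest: walk_set_rtrancl)
qed simp

lemma dpath_iff_walk:
  assumes "acyclic A"
  shows "dpath A p u v \<longleftrightarrow> walk A u p v"
proof
  show "dpath A p u v \<Longrightarrow> walk A u p v"
  proof (induction p arbitrary: u)
    case Nil
    then show ?case by (simp add: dpath_def)
  next
    case (Cons x p)
    show ?case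
    proof (cases p)
      case Nil
      then show ?thesis using Cons.prems by (auto simp: dpath_def intro: walk_single)
    next
      case (Cons y q)
      have "(x, y) \<in> A" using Cons.prems \<open>p = y # q\<close> unfolding dpath_def by force
      moreover have "dpath A p y v"
        using Cons.prems \<open>p = y # q\<close> unfolding dpath_def by fastforce
      ultimately show ?thesis using Cons.IH Cons.prems by (auto simp: dpath_def intro: walk_Cons)
    qed
  qed
next
  assume w: "walk A u p v"
  have "\<forall>i. Suc i < length p \<longrightarrow> (p ! i, p ! Suc i) \<in> A"
    using w by (induction rule: walk.induct) (auto elim: walk_ConsE simp: nth_Cons split: nat.split)
  then show "dpath A p u v"
    using w walk_last[OF w] walk_distinct[OF assms w] unfolding dpath_def by (auto elim: walk_ConsE)
qed

lemma walks_inter_junction: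
  assumes "acyclic A" "walk A w p m" "walk A m q x"
  shows "set p \<inter> set q = {m}"
proof -
  have "s = m" if "s \<in> set p" "s \<in> set q" for s
    using walk_set_rtrancl[OF assms(2) that(1)] walk_set_rtrancl[OF assms(3) that(2)]
      acyclic_impl_antisym_rtrancl[OF assms(1)] by (auto dest: antisymD)
  then show ?thesis using walk_end_in_set[OF assms(2)] walk_start_in_set[OF assms(3)] by blast
qed

section \<open>In-degree one, tree walks and lowest common ancestors\<close>

lemma indeg_one_iff: "indeg A v = 1 \<longleftrightarrow> (\<exists>!p. (p, v) \<in> A)"
proof -
  have "indeg A v = 1 \<longleftrightarrow> (\<exists>p. {u. (u, v) \<in> A} = {p})"
    unfolding indeg_def One_nat_def by (rule card_1_singleton_iff)
  also have "\<dots> \<longleftrightarrow> (\<exists>!p. (p, v) \<in> A)" by (auto simp: set_eq_iff)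
  finally show ?thesis .
qed

lemma indeg_one_arc_unique: "indeg A v = 1 \<Longrightarrow> (p, v) \<in> A \<Longrightarrow> (p', v) \<in> A \<Longrightarrow> p = p'"
  unfolding indeg_one_iff by blast

lemma parent_arc: "indeg A x = 1 \<Longrightarrow> (parent A x, x) \<in> A"
  unfolding indeg_one_iff parent_def by (rule theI')

lemma parent_eqI: "indeg A x = 1 \<Longrightarrow> (p, x) \<in> A \<Longrightarrow> parent A x = p"
  using parent_arc indeg_one_arc_unique by metis

definition tree_walk :: "('v \<times> 'v) set \<Rightarrow> 'v \<Rightarrow> 'v list \<Rightarrow> 'v \<Rightarrow> bool" where
  "tree_walk A u p v \<longleftrightarrow> walk A u p v \<and> (\<forall>s\<in>set (tl p). indeg A s = 1)"

lemma tree_walk_walk: "tree_walk A u p v \<Longrightarrow> walk A u p v"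
  unfolding tree_walk_def by simp

lemma tree_walk_Cons:
  "(u, d) \<in> A \<Longrightarrow> indeg A d = 1 \<Longrightarrow> tree_walk A d p v \<Longrightarrow> tree_walk A u (u # p) v"
proof -
  assume "(u, d) \<in> A" "indeg A d = 1" "tree_walk A d p v"
  moreover obtain p' where "p = d # p'"
    using \<open>tree_walk A d p v\<close> unfolding tree_walk_def by (blast elim: walk_ConsE)
  ultimately show ?thesis unfolding tree_walk_def by (auto intro: walk_Cons)
qed

lemma tree_walk_ancestor:
  assumes "tree_walk A d p c" and "s \<in> set p" and "(y, s) \<in> A\<^sup>*"
  shows "(y, d) \<in> A\<^sup>* \<or> y \<in> set p"
proof -
  have "walk A d p c" "\<forall>s\<in>set (tl p). indeg A s = 1"
    using assms(1) unfolding tree_walk_def by auto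
  then show ?thesis using assms(2,3)
  proof (induction arbitrary: s rule: walk.induct)
    case (walk_Cons d x p c)
    obtain p' where p: "p = x # p'" using walk_Cons.hyps(2) by (rule walk_ConsE)
    show ?case
    proof (cases "s = d")
      case False
      have ix: "indeg A x = 1" using walk_Cons.prems(1) p by simp
      have "(y, x) \<in> A\<^sup>* \<or> y \<in> set p"
        using walk_Cons.IH[of s] walk_Cons.prems False p by auto
      then show ?thesis
      proof
        assume yx: "(y, x) \<in> A\<^sup>*"
        show ?thesis
        proof (cases "y = x")
          case False
          then obtain z where "(y, z) \<in> A\<^sup>*" "(z, x) \<in> A"
            using yx by (blast dest: rtranclD tranclD2)
          then show ?thesis using indeg_one_arc_unique[OF ix _ walk_Cons.hyps(1)] by blast
        qed (simp add: p)
      qed simp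
    qed (use walk_Cons.prems in simp)
  qed simp
qed

definition lowest_common_ancestor :: "('v \<times> 'v) set \<Rightarrow> 'v \<Rightarrow> 'v \<Rightarrow> 'v \<Rightarrow> bool" where
  "lowest_common_ancestor A v a b \<longleftrightarrow> (v, a) \<in> A\<^sup>* \<and> (v, b) \<in> A\<^sup>* \<and>
     (\<forall>s. (v, s) \<in> A\<^sup>+ \<longrightarrow> (s, a) \<in> A\<^sup>* \<longrightarrow> (s, b) \<notin> A\<^sup>*)"

lemma lowest_common_ancestor_commute:
  "lowest_common_ancestor A v a b \<longleftrightarrow> lowest_common_ancestor A v b a"
  unfolding lowest_common_ancestor_def by blast

lemma lowest_common_ancestor_exists:
  assumes "finite A" "acyclic A" "(r, a) \<in> A\<^sup>*" "(r, b) \<in> A\<^sup>*"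
  shows "\<exists>v. lowest_common_ancestor A v a b"
proof -
  let ?Q = "{v. (v, a) \<in> A\<^sup>* \<and> (v, b) \<in> A\<^sup>*}"
  have "wf ((A\<inverse>)\<^sup>+)" using finite_acyclic_wf_converse[OF assms(1,2)] by (rule wf_trancl)
  moreover have "r \<in> ?Q" using assms(3,4) by simp
  ultimately obtain v where "v \<in> ?Q" and "\<And>s. (s, v) \<in> (A\<inverse>)\<^sup>+ \<Longrightarrow> s \<notin> ?Q"
    by (rule wfE_min) fast
  then show ?thesis unfolding lowest_common_ancestor_def trancl_converse by blast
qed

lemma lowest_common_ancestor_minimal:
  "lowest_common_ancestor A v a b \<Longrightarrow> (v, s) \<in> A\<^sup>+ \<Longrightarrow> (s, a) \<in> A\<^sup>* \<Longrightarrow> (s, b) \<notin> A\<^sup>*"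
  unfolding lowest_common_ancestor_def by simp

lemma lowest_common_ancestor_walks_inter:
  assumes "lowest_common_ancestor A w a b" "walk A w p a" "walk A w q b"
  shows "set p \<inter> set q = {w}"
proof -
  have "s = w" if "s \<in> set p" "s \<in> set q" for s
  proof (rule ccontr)
    assume "s \<noteq> w"
    then have "(w, s) \<in> A\<^sup>+" using walk_set_rtrancl[OF assms(2) that(1)] by (simp add: rtrancl_eq_or_trancl)
    then show False using lowest_common_ancestor_minimal[OF assms(1)]
        walk_set_rtrancl[OF assms(2) that(1)] walk_set_rtrancl[OF assms(3) that(2)] by simp
  qed
  then show ?thesis using walk_start_in_set[OF assms(2)] walk_start_in_set[OF assms(3)] by blast
qed

lemma lowest_common_ancestor_walk_tl:
  assumes "lowest_common_ancestor A v a b" "walk A v p b" "s \<in> set (tl p)"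
  shows "(v, s) \<in> A\<^sup>+" and "(s, a) \<notin> A\<^sup>*"
proof -
  show vs: "(v, s) \<in> A\<^sup>+" using walk_tl_trancl[OF assms(2,3)] .
  have "s \<in> set p" using assms(3) by (cases p) auto
  then have "(s, b) \<in> A\<^sup>*" using walk_set_rtrancl[OF assms(2)] by blast
  then show "(s, a) \<notin> A\<^sup>*"
    using lowest_common_ancestor_minimal[OF assms(1) vs] by blast
qed

section \<open>Normal networks\<close>

lemma displays_triple_distinct: "displays_triple V A X x y z \<Longrightarrow> x \<noteq> y \<and> x \<noteq> z \<and> y \<noteq> z"
  unfolding displays_triple_def by simp

locale normal_network =
  fixes V :: "'v set" and A :: "('v \<times> 'v) set" and r :: 'v and X :: "'v set"
  assumes normal: "normal V A r X"
begin

lemma phylo_network: "phylo_network V A r X"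
  using normal unfolding normal_def tree_child_def by blast

lemma finite_V: "finite V" and arcs_in_V: "A \<subseteq> V \<times> V" and acyclic: "acyclic A"
  and indeg_root: "indeg A r = 0" and leaves_eq: "X = {v \<in> V. outdeg A v = 0}"
  and indeg_leaf: "\<And>x. x \<in> X \<Longrightarrow> indeg A x = 1"
  and inner_vertex: "\<And>v. v \<in> V \<Longrightarrow> v \<noteq> r \<Longrightarrow> v \<notin> X \<Longrightarrow>
        (indeg A v = 1 \<and> outdeg A v = 2) \<or> (indeg A v = 2 \<and> outdeg A v = 1)"
  using phylo_network unfolding phylo_network_def by auto

lemma finite_A: "finite A"
  using finite_subset[OF arcs_in_V] finite_V by blast

lemma arc_tail_in_V: "(x, y) \<in> A \<Longrightarrow> x \<in> V" and arc_head_in_V: "(x, y) \<in> A \<Longrightarrow> y \<in> V"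
  using arcs_in_V by auto

lemma finite_in_arcs: "finite {u. (u, v) \<in> A}"
  by (rule finite_subset[OF _ finite_V]) (auto dest: arc_tail_in_V)

lemma finite_out_arcs: "finite {w. (v, w) \<in> A}"
  by (rule finite_subset[OF _ finite_V]) (auto dest: arc_head_in_V)

lemma arc_not_rtrancl_back: "(x, y) \<in> A \<Longrightarrow> (y, x) \<notin> A\<^sup>*"
  by (rule acyclic_rtrancl_back[OF acyclic r_into_trancl'])

lemma leaf_no_arc: "x \<in> X \<Longrightarrow> (x, y) \<notin> A"
proof
  assume "x \<in> X" "(x, y) \<in> A"
  have "outdeg A x = 0" using \<open>x \<in> X\<close> leaves_eq by simp
  with finite_out_arcs show False using \<open>(x, y) \<in> A\<close> unfolding outdeg_def by auto
qed

lemma leaf_rtrancl: "x \<in> X \<Longrightarrow> (x, y) \<in> A\<^sup>* \<Longrightarrow> y = x"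
  by (erule converse_rtranclE) (auto dest: leaf_no_arc)

lemma rtrancl_in_V: "(x, y) \<in> A\<^sup>* \<Longrightarrow> y \<in> V \<Longrightarrow> x \<in> V"
  by (erule converse_rtranclE) (auto dest: arc_tail_in_V)

lemma arc_head_not_root: "(p, v) \<in> A \<Longrightarrow> v \<noteq> r"
  using indeg_root finite_in_arcs[of r] unfolding indeg_def by auto

lemma root_rtrancl: "v \<in> V \<Longrightarrow> (r, v) \<in> A\<^sup>*"
proof (induction v rule: wf_induct_rule[OF finite_acyclic_wf[OF finite_A acyclic]])
  case (1 v)
  show ?case
  proof (cases "v = r")
    case False
    then have "indeg A v \<noteq> 0"
      using 1 indeg_leaf[of v] inner_vertex[of v] by (cases "v \<in> X") auto
    then obtain p where pv: "(p, v) \<in> A" unfolding indeg_def by fastforce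
    then have "(r, p) \<in> A\<^sup>*" using 1 arc_tail_in_V by blast
    then show ?thesis using pv by (rule rtrancl_into_rtrancl)
  qed simp
qed

lemma tree_child_arc: "v \<in> V \<Longrightarrow> v \<notin> X \<Longrightarrow> \<exists>c. (v, c) \<in> A \<and> indeg A c = 1"
  using normal indeg_leaf unfolding normal_def tree_child_def tree_vertex_def by blast

lemma tree_walk_to_leaf: "d \<in> V \<Longrightarrow> \<exists>p c. tree_walk A d p c \<and> c \<in> X"
proof (induction d rule: wf_induct_rule[OF finite_acyclic_wf_converse[OF finite_A acyclic]])
  case (1 d)
  show ?case
  proof (cases "d \<in> X")
    case True
    have "tree_walk A d [d] d" unfolding tree_walk_def by (simp add: walk_single)
    with True show ?thesis by blast
  next
    case False
    then obtain c' where c': "(d, c') \<in> A" "indeg A c' = 1" using tree_child_arc 1 by blast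
    then obtain p c where "tree_walk A c' p c" "c \<in> X" using 1 arc_head_in_V by blast
    then show ?thesis using tree_walk_Cons[OF c'] by blast
  qed
qed

lemma two_parents_reticulation:
  assumes "(p, v) \<in> A" "(p', v) \<in> A" "p \<noteq> p'"
  shows "reticulation V A v"
proof -
  have "card {p, p'} \<le> indeg A v"
    unfolding indeg_def by (rule card_mono[OF finite_in_arcs]) (use assms(1,2) in blast)
  then have "2 \<le> indeg A v" using assms(3) by simp
  moreover have "v \<in> V" "v \<noteq> r" using assms(1) arc_head_in_V arc_head_not_root by auto
  moreover have "v \<notin> X"
  proof
    assume "v \<in> X"
    then have "indeg A v = 1" by (rule indeg_leaf)
    then show False using \<open>2 \<le> indeg A v\<close> by simp
  qed
  ultimately show ?thesis using inner_vertex[of v] unfolding reticulation_def by auto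
qed

lemma parents_incomparable:
  assumes pv: "(p, v) \<in> A" and p'v: "(p', v) \<in> A" and "p \<noteq> p'"
  shows "(p, p') \<notin> A\<^sup>*"
proof
  assume "(p, p') \<in> A\<^sup>*"
  then have "(p, p') \<in> (A - {(p, v)})\<^sup>*"
    using arc_not_rtrancl_back[OF p'v] by (rule rtrancl_Diff_arc)
  moreover have "(p', v) \<in> A - {(p, v)}" using p'v \<open>p \<noteq> p'\<close> by simp
  ultimately have "(p, v) \<in> (A - {(p, v)})\<^sup>+" by (rule rtrancl_into_trancl1)
  then have "shortcut V A p v"
    unfolding shortcut_def using pv two_parents_reticulation[OF assms] by blast
  then show False using normal unfolding normal_def by simp
qed

lemma siblings_incomparable:
  assumes mx: "(m, x) \<in> A" and md: "(m, d) \<in> A" and "x \<noteq> d"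
  shows "(x, d) \<notin> A\<^sup>*"
proof
  assume "(x, d) \<in> A\<^sup>*"
  then have "(x, d) \<in> A\<^sup>+" using \<open>x \<noteq> d\<close> by (simp add: rtrancl_eq_or_trancl)
  then obtain p where xp: "(x, p) \<in> A\<^sup>*" and pd: "(p, d) \<in> A" by (blast dest: tranclD2)
  have mp: "(m, p) \<in> A\<^sup>*" using mx xp by (rule converse_rtrancl_into_rtrancl)
  have "p \<noteq> m" using xp arc_not_rtrancl_back[OF mx] by blast
  then show False using parents_incomparable[OF md pd] mp by blast
qed

lemma sibling_walks_disjoint:
  assumes mx: "(m, x) \<in> A" and md: "(m, d) \<in> A" and "x \<noteq> d"
    and P: "walk A x P a" and T: "tree_walk A d T c"
  shows "set P \<inter> set T = {}"
proof -
  have dT: "walk A d T c" "\<forall>s\<in>set (tl T). indeg A s = 1" using T unfolding tree_walk_def by auto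
  have "x \<notin> set T"
  proof
    assume "x \<in> set T"
    then have "x \<in> set (tl T)" using \<open>x \<noteq> d\<close> dT(1) by (auto elim: walk_ConsE)
    then obtain s where s: "s \<in> set T" "(s, x) \<in> A" using walk_tl_in_arc[OF dT(1)] by blast
    have "s = m" using indeg_one_arc_unique[OF _ s(2) mx] dT(2) \<open>x \<in> set (tl T)\<close> by blast
    then have "(d, m) \<in> A\<^sup>*" using walk_set_rtrancl[OF dT(1) s(1)] by simp
    then show False using arc_not_rtrancl_back[OF md] by blast
  qed
  moreover have "(x, d) \<notin> A\<^sup>*" using siblings_incomparable[OF mx md \<open>x \<noteq> d\<close>] .
  ultimately show ?thesis
    using tree_walk_ancestor[OF T] walk_set_rtrancl[OF P] by blast
qed

lemma displays_tripleI:
  assumes "x \<in> X" "y \<in> X" "z \<in> X" "u \<notin> X" "w \<noteq> u"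
    and P1: "walk A w P1 u" and P2: "walk A w P2 z" and P3: "walk A u P3 x" and P4: "walk A u P4 y"
    and "set P1 \<inter> set P2 = {w}" "set P1 \<inter> set P3 = {u}" "set P1 \<inter> set P4 = {u}"
    and "set P2 \<inter> set P3 = {}" "set P2 \<inter> set P4 = {}" "set P3 \<inter> set P4 = {u}"
  shows "displays_triple V A X x y z"
proof -
  have "x \<in> V" "u \<in> V" "w \<in> V"
    using assms(1) leaves_eq rtrancl_in_V walk_rtrancl[OF P3] walk_rtrancl[OF P1] by auto
  moreover have "x \<noteq> y" "x \<noteq> z" "y \<noteq> z"
    using assms walk_end_in_set[OF P2] walk_end_in_set[OF P3] walk_end_in_set[OF P4] by auto
  ultimately show ?thesis
    using assms unfolding displays_triple_def dpath_iff_walk[OF acyclic] by blast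
qed

lemma displays_triple_parent_neq:
  assumes "displays_triple V A X x y z"
  shows "parent A x \<noteq> parent A z" and "parent A y \<noteq> parent A z"
proof -
  obtain w u P1 P2 P3 P4 where "x \<in> X" "y \<in> X" "z \<in> X" "x \<noteq> y" "x \<noteq> z" "y \<noteq> z"
    and "w \<in> V" "u \<in> V" "w \<noteq> u"
    and P1: "walk A w P1 u" and P2: "walk A w P2 z" and P3: "walk A u P3 x" and P4: "walk A u P4 y"
    and "set P1 \<inter> set P2 = {w}" "set P1 \<inter> set P3 = {u}" "set P1 \<inter> set P4 = {u}"
    and "set P2 \<inter> set P3 = {}" "set P2 \<inter> set P4 = {}" "set P3 \<inter> set P4 = {u}"
    using assms unfolding displays_triple_def dpath_iff_walk[OF acyclic] by (elim conjE exE) assumption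
  have "w \<noteq> z"
  proof
    assume "w = z"
    then have "(z, u) \<in> A\<^sup>*" using walk_rtrancl[OF P1] by simp
    then have "u = z" by (rule leaf_rtrancl[OF \<open>z \<in> X\<close>])
    then show False using \<open>w \<noteq> u\<close> \<open>w = z\<close> by simp
  qed
  then obtain s where s: "s \<in> set P2" "(s, z) \<in> A" using walk_last_arc[OF P2] by blast
  have pz: "parent A z = s" using parent_eqI[OF indeg_leaf[OF \<open>z \<in> X\<close>] s(2)] .
  have "u \<notin> X"
  proof
    assume "u \<in> X"
    have "x = u" using leaf_rtrancl[OF \<open>u \<in> X\<close> walk_rtrancl[OF P3]] .
    moreover have "y = u" using leaf_rtrancl[OF \<open>u \<in> X\<close> walk_rtrancl[OF P4]] .
    ultimately show False using \<open>x \<noteq> y\<close> by simp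
  qed
  have parent_neq: "parent A l \<noteq> parent A z" if Q: "walk A u Q l" "l \<in> X" "set P2 \<inter> set Q = {}" for Q l
  proof -
    have "u \<noteq> l" using \<open>u \<notin> X\<close> Q(2) by auto
    then obtain s' where s': "s' \<in> set Q" "(s', l) \<in> A" using walk_last_arc[OF Q(1)] by blast
    have "parent A l = s'" by (rule parent_eqI[OF indeg_leaf[OF Q(2)] s'(2)])
    moreover have "s' \<noteq> s" using s(1) s'(1) Q(3) by blast
    ultimately show ?thesis using pz by simp
  qed
  show "parent A x \<noteq> parent A z" by (rule parent_neq[OF P3 \<open>x \<in> X\<close> \<open>set P2 \<inter> set P3 = {}\<close>])
  show "parent A y \<noteq> parent A z" by (rule parent_neq[OF P4 \<open>y \<in> X\<close> \<open>set P2 \<inter> set P4 = {}\<close>])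
qed

text \<open>The root of the embedding of ac|b built below: a lowest common ancestor w of v and m,
  together with walks from w to m and, through v, to b.\<close>

lemma triple_root_walks:
  assumes lca: "lowest_common_ancestor A v a b" and "a \<in> X"
    and mv: "(m, v) \<notin> A\<^sup>*" and ma: "(m, a) \<in> A\<^sup>*" and "m \<in> V"
  obtains w W P where "w \<noteq> m" "walk A w W m" "walk A w P b" "set W \<inter> set P = {w}"
    and "\<And>s. s \<in> set P \<Longrightarrow> (s, v) \<in> A\<^sup>* \<or> (v, s) \<in> A\<^sup>* \<and> (s, b) \<in> A\<^sup>* \<and> (s, a) \<notin> A\<^sup>*"
proof -
  have va: "(v, a) \<in> A\<^sup>*" and vb: "(v, b) \<in> A\<^sup>*" using lca unfolding lowest_common_ancestor_def by auto
  have "v \<in> V" using rtrancl_in_V[OF va] \<open>a \<in> X\<close> leaves_eq by blast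
  obtain w where w: "lowest_common_ancestor A w v m"
    using lowest_common_ancestor_exists[OF finite_A acyclic root_rtrancl root_rtrancl] \<open>v \<in> V\<close> \<open>m \<in> V\<close>
    by blast
  then have "(w, v) \<in> A\<^sup>*" "(w, m) \<in> A\<^sup>*" unfolding lowest_common_ancestor_def by auto
  then obtain W1 W2 where W1: "walk A w W1 v" and W2: "walk A w W2 m" using rtrancl_imp_walk by metis
  obtain Pb where Pb: "walk A v Pb b" using rtrancl_imp_walk[OF vb] by blast
  then obtain Pb' where Pb': "Pb = v # Pb'" by (rule walk_ConsE)
  have P: "walk A w (W1 @ Pb') b" using walk_append[OF W1 Pb] Pb' by simp
  have below_v: "(v, s) \<in> A\<^sup>* \<and> (s, b) \<in> A\<^sup>* \<and> (s, a) \<notin> A\<^sup>*" if "s \<in> set Pb'" for s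
    using lowest_common_ancestor_walk_tl[OF lca Pb, of s] walk_set_rtrancl[OF Pb, of s] that Pb'
    by (simp add: trancl_into_rtrancl)
  have "w \<noteq> m" using walk_rtrancl[OF W1] mv by blast
  moreover have "set W2 \<inter> set (W1 @ Pb') = {w}"
  proof -
    have "set W1 \<inter> set W2 = {w}" by (rule lowest_common_ancestor_walks_inter[OF w W1 W2])
    moreover have "s \<notin> set Pb'" if "s \<in> set W2" for s
      using walk_set_rtrancl[OF W2 that] ma below_v by (meson rtrancl_trans)
    ultimately show ?thesis by auto
  qed
  moreover have "(s, v) \<in> A\<^sup>* \<or> (v, s) \<in> A\<^sup>* \<and> (s, b) \<in> A\<^sup>* \<and> (s, a) \<notin> A\<^sup>*"
    if "s \<in> set (W1 @ Pb')" for s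
    using that walk_set_rtrancl[OF W1, of s] below_v by auto
  ultimately show thesis using that W2 P by blast
qed

lemma branching_displays_triple:
  assumes lca: "lowest_common_ancestor A v a b" and "a \<in> X" "b \<in> X"
    and mv: "(m, v) \<notin> A\<^sup>*" and mx: "(m, x) \<in> A" and xa: "(x, a) \<in> A\<^sup>*"
    and md: "(m, d) \<in> A" and "x \<noteq> d" and T: "tree_walk A d T c" and "c \<in> X"
    and T_off: "\<And>s. s \<in> set T \<Longrightarrow> (v, s) \<in> A\<^sup>* \<Longrightarrow> (s, b) \<notin> A\<^sup>*"
  shows "displays_triple V A X a c b"
proof -
  have ma: "(m, a) \<in> A\<^sup>*" using mx xa by (rule converse_rtrancl_into_rtrancl)
  have "m \<notin> X" using leaf_no_arc mx by blast
  obtain w W P where "w \<noteq> m" and W: "walk A w W m" and P: "walk A w P b"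
    and "set W \<inter> set P = {w}"
    and P_below: "\<And>s. s \<in> set P \<Longrightarrow> (s, v) \<in> A\<^sup>* \<or> (v, s) \<in> A\<^sup>* \<and> (s, b) \<in> A\<^sup>* \<and> (s, a) \<notin> A\<^sup>*"
    using triple_root_walks[OF lca \<open>a \<in> X\<close> mv ma arc_tail_in_V[OF mx]] by blast
  have P_m: "(v, s) \<in> A\<^sup>* \<and> (s, b) \<in> A\<^sup>* \<and> (s, a) \<notin> A\<^sup>*" if "s \<in> set P" "(m, s) \<in> A\<^sup>*" for s
    using P_below[OF that(1)] that(2) mv by (meson rtrancl_trans)
  obtain Px where Px: "walk A x Px a" using rtrancl_imp_walk[OF xa] by blast
  have P3: "walk A m (m # Px) a" using mx Px by (rule walk_Cons)
  have P4: "walk A m (m # T) c" using md tree_walk_walk[OF T] by (rule walk_Cons)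
  have "set P \<inter> set (m # Px) = {}"
    using P_m walk_set_rtrancl[OF P3] by blast
  moreover have "set P \<inter> set (m # T) = {}"
    using P_m walk_set_rtrancl[OF P4] T_off ma by fastforce
  moreover have "set (m # Px) \<inter> set (m # T) = {m}"
  proof -
    have "m \<notin> set Px" using walk_set_rtrancl[OF Px] arc_not_rtrancl_back[OF mx] by blast
    moreover have "m \<notin> set T"
      using walk_set_rtrancl[OF tree_walk_walk[OF T]] arc_not_rtrancl_back[OF md] by blast
    ultimately show ?thesis using sibling_walks_disjoint[OF mx md \<open>x \<noteq> d\<close> Px T] by auto
  qed
  ultimately show ?thesis
    using displays_tripleI[OF \<open>a \<in> X\<close> \<open>c \<in> X\<close> \<open>b \<in> X\<close> \<open>m \<notin> X\<close> \<open>w \<noteq> m\<close> W P P3 P4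
        \<open>set W \<inter> set P = {w}\<close> walks_inter_junction[OF acyclic W P3] walks_inter_junction[OF acyclic W P4]]
    by blast
qed

lemma tree_vertex_child_displays_triple:
  assumes lca: "lowest_common_ancestor A v a b" and "a \<in> X" "b \<in> X"
    and vu: "(v, u) \<in> A" and ut: "(u, t) \<in> A" and ta: "(t, a) \<in> A\<^sup>*" and "outdeg A u = 2"
  shows "\<exists>c. displays_triple V A X a c b"
proof -
  obtain d where ud: "(u, d) \<in> A" and "t \<noteq> d"
    using \<open>outdeg A u = 2\<close> ut unfolding outdeg_def card_2_iff' by blast
  obtain T c where T: "tree_walk A d T c" "c \<in> X"
    using tree_walk_to_leaf[OF arc_head_in_V[OF ud]] by blast
  have "(u, b) \<notin> A\<^sup>*"
    using lowest_common_ancestor_minimal[OF lca r_into_trancl'[OF vu]] ut ta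
    by (meson converse_rtrancl_into_rtrancl)
  then have "(s, b) \<notin> A\<^sup>*" if "s \<in> set T" for s
    using walk_set_rtrancl[OF tree_walk_walk[OF T(1)] that] ud
    by (meson converse_rtrancl_into_rtrancl rtrancl_trans)
  then show ?thesis
    using branching_displays_triple[OF lca \<open>a \<in> X\<close> \<open>b \<in> X\<close> arc_not_rtrancl_back[OF vu] ut ta
        ud \<open>t \<noteq> d\<close> T] by blast
qed

lemma reticulation_child_displays_triple:
  assumes lca: "lowest_common_ancestor A v a b" and "a \<in> X" "b \<in> X"
    and vu: "(v, u) \<in> A" and ua: "(u, a) \<in> A\<^sup>*" and "indeg A u = 2"
  shows "\<exists>c. displays_triple V A X a c b"
proof -
  obtain q where qu: "(q, u) \<in> A" and "q \<noteq> v"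
    using \<open>indeg A u = 2\<close> vu unfolding indeg_def card_2_iff' by blast
  obtain d where qd: "(q, d) \<in> A" and "indeg A d = 1"
    using tree_child_arc[OF arc_tail_in_V[OF qu]] leaf_no_arc qu by blast
  have "u \<noteq> d" using \<open>indeg A u = 2\<close> \<open>indeg A d = 1\<close> by auto
  obtain T c where T: "tree_walk A d T c" "c \<in> X"
    using tree_walk_to_leaf[OF arc_head_in_V[OF qd]] by blast
  have qv: "(q, v) \<notin> A\<^sup>*" and vq: "(v, q) \<notin> A\<^sup>*"
    using parents_incomparable[OF qu vu] parents_incomparable[OF vu qu] \<open>q \<noteq> v\<close> by auto
  have "(v, s) \<notin> A\<^sup>*" if "s \<in> set T" for s
  proof
    assume vs: "(v, s) \<in> A\<^sup>*"
    have "s \<in> set (q # T)" using that by simp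
    then have "(v, q) \<in> A\<^sup>* \<or> v \<in> set (q # T)"
      using tree_walk_ancestor[OF tree_walk_Cons[OF qd \<open>indeg A d = 1\<close> T(1)] _ vs] by simp
    moreover have "(q, v) \<in> A\<^sup>*" if "v \<in> set T"
      using qd walk_set_rtrancl[OF tree_walk_walk[OF T(1)] that]
      by (blast intro: converse_rtrancl_into_rtrancl)
    ultimately show False using vq qv \<open>q \<noteq> v\<close> by auto
  qed
  then show ?thesis
    using branching_displays_triple[OF lca \<open>a \<in> X\<close> \<open>b \<in> X\<close> qv qu ua qd \<open>u \<noteq> d\<close> T] by blast
qed

lemma lca_child_displays_triple:
  assumes lca: "lowest_common_ancestor A v a b" and "a \<in> X" "b \<in> X"
    and vu: "(v, u) \<in> A" and ua: "(u, a) \<in> A\<^sup>*" and "u \<noteq> a"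
  shows "\<exists>c. displays_triple V A X a c b"
proof -
  have "u \<notin> X" using leaf_rtrancl[of u a] ua \<open>u \<noteq> a\<close> by auto
  obtain t where ut: "(u, t) \<in> A" and ta: "(t, a) \<in> A\<^sup>*"
    using ua \<open>u \<noteq> a\<close> by (blast dest: rtranclD tranclD)
  from inner_vertex[OF arc_head_in_V[OF vu] arc_head_not_root[OF vu] \<open>u \<notin> X\<close>] show ?thesis
    using tree_vertex_child_displays_triple[OF assms(1-4) ut ta]
      reticulation_child_displays_triple[OF assms(1-5)] by blast
qed

lemma not_cherry_displays_separating_triple:
  assumes "a \<in> X" "b \<in> X" "a \<noteq> b" "\<not> cherry A X a b"
  shows "\<exists>c. displays_triple V A X a c b \<or> displays_triple V A X b c a"
proof -
  have "a \<in> V" "b \<in> V" using assms(1,2) leaves_eq by auto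
  then obtain v where lca: "lowest_common_ancestor A v a b"
    using lowest_common_ancestor_exists[OF finite_A acyclic root_rtrancl root_rtrancl] by blast
  then have va: "(v, a) \<in> A\<^sup>*" and vb: "(v, b) \<in> A\<^sup>*"
    unfolding lowest_common_ancestor_def by auto
  have "v \<noteq> a" using leaf_rtrancl[OF \<open>a \<in> X\<close>, of b] vb \<open>a \<noteq> b\<close> by auto
  then obtain ua where vua: "(v, ua) \<in> A" and uaa: "(ua, a) \<in> A\<^sup>*"
    using va by (blast dest: rtranclD tranclD)
  have "v \<noteq> b" using leaf_rtrancl[OF \<open>b \<in> X\<close>, of a] va \<open>a \<noteq> b\<close> by auto
  then obtain ub where vub: "(v, ub) \<in> A" and ubb: "(ub, b) \<in> A\<^sup>*"
    using vb by (blast dest: rtranclD tranclD)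
  consider "ua \<noteq> a" | "ub \<noteq> b" | "ua = a" "ub = b" by blast
  then show ?thesis
  proof cases
    case 1
    then show ?thesis using lca_child_displays_triple[OF lca assms(1,2) vua uaa] by blast
  next
    case 2
    then show ?thesis using lca_child_displays_triple[OF lowest_common_ancestor_commute[THEN iffD1, OF lca]
          assms(2,1) vub ubb] by blast
  next
    case 3
    then have "parent A a = v" "parent A b = v"
      using parent_eqI[OF indeg_leaf[OF assms(1)], of v] parent_eqI[OF indeg_leaf[OF assms(2)], of v] vua vub
      by simp_all
    then show ?thesis using assms unfolding cherry_def by simp
  qed
qed

lemma cherry_displayed_triple:
  assumes "cherry A X a b" and "a \<noteq> b" and "displays_triple V A X x y z" and "{a, b} \<subseteq> {x, y, z}"
  shows "{a, b} = {x, y}"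
proof -
  have "parent A a = parent A b" using assms(1) unfolding cherry_def by simp
  moreover have "parent A x \<noteq> parent A z" "parent A y \<noteq> parent A z"
    using displays_triple_parent_neq[OF assms(3)] by auto
  ultimately have "z \<noteq> a" "z \<noteq> b" using assms(2,4) by auto
  then show ?thesis using assms(2,4) displays_triple_distinct[OF assms(3)] by auto
qed

end

theorem lemma2:
  fixes V :: "'v set" and A :: "('v \<times> 'v) set" and r :: 'v and X :: "'v set"
  assumes "normal V A r X" and "card X \<ge> 3"
    and "a \<in> X" and "b \<in> X" and "a \<noteq> b"
  shows "cherry A X a b \<longleftrightarrow>
    (\<forall>x y z. (x, y, z) \<in> displayed_triples V A X \<and> {a, b} \<subseteq> {x, y, z} \<longrightarrow> {a, b} = {x, y})"
    (is "_ \<longleftrightarrow> ?separated")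
proof -
  interpret normal_network V A r X by (rule normal_network.intro) (fact assms(1))
  show ?thesis
  proof
    assume "cherry A X a b"
    then show ?separated
      using cherry_displayed_triple[OF _ assms(5)] unfolding displayed_triples_def by blast
  next
    assume ?separated
    then have "\<not> displays_triple V A X e c f" if "{e, f} = {a, b}" for c e f
      using that displays_triple_distinct[of V A X e c f] assms(5) unfolding displayed_triples_def
      by (auto simp: doubleton_eq_iff)
    then show "cherry A X a b"
      using not_cherry_displays_separating_triple[OF assms(3-5)] by blast
  qed
qed

end
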